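(* Let $k\ge 3$, $n_1,\dots,n_k\ge 2$, let $j\in[k]$ be an index with $n_j=\min\{n_1,\dots,n_k\}$, and let $f(k,n_j)=(n_j-1)(k-1)+\tfrac{(n_j-2)(n_j-1)}{2}-\tfrac{(k-2)(k-1)}{2}$. Let $G\in\mathcal{O}(K_{n_1,\dots,n_k})$ have the minimum number of edges among graphs in this orbit. Then: (1) If $k$ is even and $f(k,n_j)>0$, then $G=\Gamma(\text{complete};\ t_i=\mathrm{ss}\ \forall i)$ (a multi-leaf repeater graph), and $|E(G)|=\tfrac{k(k-1)}{2}+\sum_{i=1}^k(n_i-1)$. (2) If $k$ is even and $f(k,n_j)<0$, then $G=\Gamma(\text{star toward }j;\ t_j=\mathrm{c},\ t_i=\mathrm{ss}\ \forall i\ne j)$, and $|E(G)|=n_j(k-1)+\tfrac{n_j(n_j-1)}{2}+\sum_{i\ne j}(n_i-1)$. If $f(k,n_j)=0$, the graphs of cases (1) and (2) have the same number of edges and both are minimal in the orbit. (3) If $k$ is odd, then $G=\Gamma(\text{star toward }j;\ t_j=\mathrm{sc},\ t_i=\mathrm{ss}\ \forall i\ne j)$, and $|E(G)|=n_j(k-1)+\sum_{i\ne j}(n_i-1)$.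
   Context: $V=U_1\sqcup\cdots\sqcup U_k$ with $|U_i|=n_i$; $K_{n_1,\dots,n_k}$ has edges exactly between different parts. The local complement $c_v(G)$ complements the edges among the neighbours of $v$; $\mathcal{O}(G)$ is the set of graphs on $V$ obtainable from $G$ by finite sequences of local complements. Graph family $\Gamma$: assign to each $i\in[k]$ a type $t_i\in\{\mathrm{c},\mathrm{sc},\mathrm{ss}\}$: if $t_i=\mathrm{c}$, $U_i$ is a clique and $R_i=U_i$; if $t_i=\mathrm{sc}$, $U_i$ is an independent set and $R_i=U_i$; if $t_i=\mathrm{ss}$, a chosen center $c_i\in U_i$ is adjacent to all other vertices of $U_i$, $U_i$ has no other internal edges, and $R_i=\{c_i\}$. Additionally choose a central type: "complete" means that for all $i\ne l$ every vertex of $R_i$ is adjacent to every vertex of $R_l$; "star toward $j$" means that for each $i\ne j$ every vertex of $R_i$ is adjacent to every vertex of $R_j$, with no other edges between different parts. $\Gamma(\cdot)$ denotes the resulting graph (for some choice of centers). *)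

theory Defs
  imports Complex_Main
begin

text \<open>Simple graphs on a vertex type 'a are represented by their edge sets:
  sets of two-element sets {x, y} with x \<noteq> y.\<close>

definition nbhd :: "'a set set \<Rightarrow> 'a \<Rightarrow> 'a set" where
  "nbhd E v = {u. u \<noteq> v \<and> {u, v} \<in> E}"

definition pairs_in :: "'a set \<Rightarrow> 'a set set" where
  "pairs_in S = {{x, y} | x y. x \<in> S \<and> y \<in> S \<and> x \<noteq> y}"

definition local_comp :: "'a set set \<Rightarrow> 'a \<Rightarrow> 'a set set" where
  "local_comp E v = (E - pairs_in (nbhd E v)) \<union> (pairs_in (nbhd E v) - E)"

inductive_set lc_orbit :: "'a set \<Rightarrow> 'a set set \<Rightarrow> 'a set set set"
  for V :: "'a set" and E :: "'a set set" where
  base: "E \<in> lc_orbit V E"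
| step: "H \<in> lc_orbit V E \<Longrightarrow> v \<in> V \<Longrightarrow> local_comp H v \<in> lc_orbit V E"

definition complete_multipartite :: "nat \<Rightarrow> (nat \<Rightarrow> 'a set) \<Rightarrow> 'a set set" where
  "complete_multipartite k U =
     {{x, y} | x y i l. i \<in> {1..k} \<and> l \<in> {1..k} \<and> i \<noteq> l \<and> x \<in> U i \<and> y \<in> U l}"

datatype part_type = PC | PSC | PSS

datatype central_type = Complete | StarToward nat

definition rep_set :: "(nat \<Rightarrow> part_type) \<Rightarrow> (nat \<Rightarrow> 'a) \<Rightarrow> (nat \<Rightarrow> 'a set) \<Rightarrow> nat \<Rightarrow> 'a set" where
  "rep_set t c U i = (if t i = PSS then {c i} else U i)"

definition intra_edges :: "(nat \<Rightarrow> part_type) \<Rightarrow> (nat \<Rightarrow> 'a) \<Rightarrow> (nat \<Rightarrow> 'a set) \<Rightarrow> nat \<Rightarrow> 'a set set" where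
  "intra_edges t c U i =
     (case t i of
        PC \<Rightarrow> pairs_in (U i)
      | PSC \<Rightarrow> {}
      | PSS \<Rightarrow> {{c i, u} | u. u \<in> U i \<and> u \<noteq> c i})"

definition inter_edges :: "nat \<Rightarrow> central_type \<Rightarrow> (nat \<Rightarrow> part_type) \<Rightarrow> (nat \<Rightarrow> 'a) \<Rightarrow> (nat \<Rightarrow> 'a set) \<Rightarrow> 'a set set" where
  "inter_edges k ct t c U =
     (case ct of
        Complete \<Rightarrow> {{x, y} | x y i l. i \<in> {1..k} \<and> l \<in> {1..k} \<and> i \<noteq> l \<and>
                                    x \<in> rep_set t c U i \<and> y \<in> rep_set t c U l}
      | StarToward j \<Rightarrow> {{x, y} | x y i. i \<in> {1..k} \<and> i \<noteq> j \<and>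
                                    x \<in> rep_set t c U i \<and> y \<in> rep_set t c U j})"

text \<open>The graph Gamma(central type; part types t) with centers c (c i \<in> U i is only
  relevant for parts of type ss).\<close>
definition Gamma :: "nat \<Rightarrow> (nat \<Rightarrow> 'a set) \<Rightarrow> central_type \<Rightarrow> (nat \<Rightarrow> part_type) \<Rightarrow> (nat \<Rightarrow> 'a) \<Rightarrow> 'a set set" where
  "Gamma k U ct t c = (\<Union>i\<in>{1..k}. intra_edges t c U i) \<union> inter_edges k ct t c U"

definition valid_centers :: "nat \<Rightarrow> (nat \<Rightarrow> 'a set) \<Rightarrow> (nat \<Rightarrow> 'a) \<Rightarrow> bool" where
  "valid_centers k U c = (\<forall>i\<in>{1..k}. c i \<in> U i)"

definition f_val :: "nat \<Rightarrow> nat \<Rightarrow> real" where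
  "f_val k m = (real m - 1) * (real k - 1) + (real m - 2) * (real m - 1) / 2
               - (real k - 2) * (real k - 1) / 2"

definition Gamma1 :: "nat \<Rightarrow> (nat \<Rightarrow> 'a set) \<Rightarrow> (nat \<Rightarrow> 'a) \<Rightarrow> 'a set set" where
  "Gamma1 k U c = Gamma k U Complete (\<lambda>i. PSS) c"

definition Gamma2 :: "nat \<Rightarrow> (nat \<Rightarrow> 'a set) \<Rightarrow> nat \<Rightarrow> (nat \<Rightarrow> 'a) \<Rightarrow> 'a set set" where
  "Gamma2 k U j c = Gamma k U (StarToward j) (\<lambda>i. if i = j then PC else PSS) c"

definition Gamma3 :: "nat \<Rightarrow> (nat \<Rightarrow> 'a set) \<Rightarrow> nat \<Rightarrow> (nat \<Rightarrow> 'a) \<Rightarrow> 'a set set" where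
  "Gamma3 k U j c = Gamma k U (StarToward j) (\<lambda>i. if i = j then PSC else PSS) c"

end

theory Submission
  imports Defs
begin

(*
  Every graph in the local-complementation orbit of K_{n_1,...,n_k} is itself a graph
  Gamma(ct; t), subject to a parity invariant: for the complete type no part is a clique and
  the number of ss parts is even; for a star toward j the hub is not ss, no leaf is an
  independent set, and the hub is a clique exactly when the number of ss parts is odd.  This
  family is closed under local complementation at every vertex, and complementing at centres
  reaches every star with ss leaves (its hub type forced by the parity of k) and, for even k,
  Gamma(complete; all ss).  Counting edges by the degree sum, an independent part in the
  complete type and a clique leaf in a star both cost extra edges, and a larger hub costs
  more; so a minimal graph is Gamma(complete; all ss) or a star with ss leaves and a hub of
  minimum size, and for even k the sign of f(k, n_j) decides between the two.
*)

lemma even_card_filter_toggle: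
  assumes "finite A" "a \<in> A" "\<And>x. x \<in> A \<Longrightarrow> x \<noteq> a \<Longrightarrow> Q x \<longleftrightarrow> P x" "Q a \<longleftrightarrow> \<not> P a"
  shows "even (card {x \<in> A. Q x}) \<longleftrightarrow> odd (card {x \<in> A. P x})"
proof -
  let ?S = "{x \<in> A - {a}. P x}"
  have S: "finite ?S" "a \<notin> ?S"
    using assms(1) by auto
  have "{x \<in> A. Q x} = (if Q a then insert a ?S else ?S)"
    and "{x \<in> A. P x} = (if P a then insert a ?S else ?S)"
    using assms(2,3) by auto
  then show ?thesis
    using S assms(4) by simp
qed

lemma mult_sum_one_plus_ge:
  fixes s :: "'b \<Rightarrow> real"
  assumes "finite A" "i \<in> A" "\<And>l. l \<in> A \<Longrightarrow> s l \<ge> 0"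
  shows "(1 + s i) * (\<Sum>l\<in>A - {i}. 1 + s l) \<ge> (real (card A) - 1) * (1 + s i) + ((\<Sum>l\<in>A. s l) - s i)"
proof -
  have card: "card A \<ge> 1"
    using assms(1,2) by (auto simp: Suc_le_eq card_gt_0_iff)
  have "(1 + s i) * (\<Sum>l\<in>A - {i}. 1 + s l) = (\<Sum>l\<in>A - {i}. (1 + s i) * (1 + s l))"
    by (simp add: sum_distrib_left)
  also have "\<dots> \<ge> (\<Sum>l\<in>A - {i}. 1 + s i + s l)"
    using assms(2,3) by (intro sum_mono) (simp add: algebra_simps)
  also have "(\<Sum>l\<in>A - {i}. 1 + s i + s l) = (real (card A) - 1) * (1 + s i) + ((\<Sum>l\<in>A. s l) - s i)"
    using assms(1,2) card by (simp add: sum.distrib sum_diff1 of_nat_diff algebra_simps)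
  finally show ?thesis .
qed

section \<open>Graphs given by an adjacency relation\<close>

definition edges_on :: "'a set \<Rightarrow> ('a \<Rightarrow> 'a \<Rightarrow> bool) \<Rightarrow> 'a set set" where
  "edges_on V P = {{x, y} | x y. x \<in> V \<and> y \<in> V \<and> x \<noteq> y \<and> P x y}"

lemma doubleton_in_edges_on:
  assumes "symp P"
  shows "{a, b} \<in> edges_on V P \<longleftrightarrow> a \<in> V \<and> b \<in> V \<and> a \<noteq> b \<and> P a b"
  using sympD[OF assms] unfolding edges_on_def by (auto simp: doubleton_eq_iff)

lemma edges_on_cong:
  "(\<And>x y. x \<in> V \<Longrightarrow> y \<in> V \<Longrightarrow> x \<noteq> y \<Longrightarrow> P x y = Q x y) \<Longrightarrow> edges_on V P = edges_on V Q"
  unfolding edges_on_def by blast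

lemma doubleton_in_pairs_in: "{a, b} \<in> pairs_in S \<longleftrightarrow> a \<in> S \<and> b \<in> S \<and> a \<noteq> b"
  unfolding pairs_in_def by (auto simp: doubleton_eq_iff)

lemma doubleton_sets_eqI:
  assumes "A \<union> B \<subseteq> {{x, y} | x y. x \<in> V \<and> y \<in> V \<and> x \<noteq> y}"
    and "\<And>x y. x \<in> V \<Longrightarrow> y \<in> V \<Longrightarrow> x \<noteq> y \<Longrightarrow> {x, y} \<in> A \<longleftrightarrow> {x, y} \<in> B"
  shows "A = B"
proof (rule set_eqI)
  fix e
  show "e \<in> A \<longleftrightarrow> e \<in> B"
  proof (cases "e \<in> A \<union> B")
    case True
    then obtain x y where "e = {x, y}" "x \<in> V" "y \<in> V" "x \<noteq> y"
      using assms(1) by blast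
    then show ?thesis using assms(2) by blast
  qed blast
qed

lemma local_comp_edges_on:
  assumes sym: "symp P" and v: "v \<in> V"
  shows "local_comp (edges_on V P) v =
    edges_on V (\<lambda>x y. P x y \<noteq> (x \<noteq> v \<and> y \<noteq> v \<and> P v x \<and> P v y))"
proof -
  let ?Q = "\<lambda>x y. P x y \<noteq> (x \<noteq> v \<and> y \<noteq> v \<and> P v x \<and> P v y)"
  have "symp ?Q"
    using sym by (auto simp: symp_def)
  have nbhd: "nbhd (edges_on V P) v = {u \<in> V. u \<noteq> v \<and> P v u}"
    using v sympD[OF sym] unfolding nbhd_def doubleton_in_edges_on[OF sym] by blast
  have "{x, y} \<in> local_comp (edges_on V P) v \<longleftrightarrow> {x, y} \<in> edges_on V ?Q"
    if "x \<in> V" "y \<in> V" "x \<noteq> y" for x y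
  proof -
    have "{x, y} \<in> local_comp (edges_on V P) v \<longleftrightarrow>
        ({x, y} \<in> edges_on V P) \<noteq> ({x, y} \<in> pairs_in {u \<in> V. u \<noteq> v \<and> P v u})"
      unfolding local_comp_def nbhd by blast
    also have "\<dots> \<longleftrightarrow> ?Q x y"
      unfolding doubleton_in_edges_on[OF sym] doubleton_in_pairs_in using that by auto
    finally show ?thesis
      unfolding doubleton_in_edges_on[OF \<open>symp ?Q\<close>] using that by auto
  qed
  moreover have "local_comp (edges_on V P) v \<union> edges_on V ?Q \<subseteq>
      {{x, y} | x y. x \<in> V \<and> y \<in> V \<and> x \<noteq> y}"
    unfolding local_comp_def nbhd unfolding edges_on_def pairs_in_def by blast
  ultimately show ?thesis
    by (rule doubleton_sets_eqI[rotated])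
qed

lemma sum_degree_edges_on:
  assumes fin: "finite V" and sym: "symp P"
  shows "(\<Sum>x\<in>V. card {y \<in> V. y \<noteq> x \<and> P x y}) = 2 * card (edges_on V P)"
proof -
  define arcs where "arcs e = {(x, y). {x, y} = e \<and> x \<noteq> y}" for e :: "'a set"
  have arcs_edge: "arcs {x, y} = {(x, y), (y, x)}" if "x \<noteq> y" for x y
    unfolding arcs_def using that by (auto simp: doubleton_eq_iff)
  have arcs_cover: "Sigma V (\<lambda>x. {y \<in> V. y \<noteq> x \<and> P x y}) = (\<Union>e\<in>edges_on V P. arcs e)"
    using sympD[OF sym] unfolding arcs_def edges_on_def by (auto simp: doubleton_eq_iff)
  have "finite (edges_on V P)"
    using finite_subset[of "edges_on V P" "Pow V"] fin unfolding edges_on_def by auto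
  then have "card (Sigma V (\<lambda>x. {y \<in> V. y \<noteq> x \<and> P x y})) =
      (\<Sum>e\<in>edges_on V P. card (arcs e))"
    unfolding arcs_cover by (intro card_UN_disjoint) (auto simp: edges_on_def arcs_edge)
  also have "\<dots> = (\<Sum>e\<in>edges_on V P. 2)"
    by (rule sum.cong) (auto simp: edges_on_def arcs_edge)
  finally show ?thesis using fin by simp
qed

section \<open>The graphs \<open>\<Gamma>\<close>\<close>

fun parts_adjacent :: "central_type \<Rightarrow> nat \<Rightarrow> nat \<Rightarrow> bool" where
  "parts_adjacent Complete i l = True"
| "parts_adjacent (StarToward j) i l = (i = j \<or> l = j)"

lemma parts_adjacent_commute: "parts_adjacent ct i l = parts_adjacent ct l i"
  by (cases ct) auto

fun toggle_clique :: "part_type \<Rightarrow> part_type" where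
  "toggle_clique PC = PSC"
| "toggle_clique PSC = PC"
| "toggle_clique PSS = PSS"

lemma toggle_clique_eq_PSS_iff [simp]: "toggle_clique s = PSS \<longleftrightarrow> s = PSS"
  by (cases s) auto

lemma part_type_cases_disj: "t = PC \<or> t = PSC \<or> t = PSS"
  by (cases t) auto

lemma complete_multipartite_eq_Gamma:
  "complete_multipartite k U = Gamma k U Complete (\<lambda>_. PSC) c"
  unfolding complete_multipartite_def Gamma_def intra_edges_def inter_edges_def rep_set_def
  by simp

locale multipartite =
  fixes k :: nat and U :: "nat \<Rightarrow> 'a set" and n :: "nat \<Rightarrow> nat" and V :: "'a set"
  assumes finite_U: "i \<in> {1..k} \<Longrightarrow> finite (U i)"
    and card_U: "i \<in> {1..k} \<Longrightarrow> card (U i) = n i"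
    and n_ge_2: "i \<in> {1..k} \<Longrightarrow> n i \<ge> 2"
    and U_disjoint: "i \<in> {1..k} \<Longrightarrow> l \<in> {1..k} \<Longrightarrow> i \<noteq> l \<Longrightarrow> U i \<inter> U l = {}"
    and V_eq: "V = (\<Union>i\<in>{1..k}. U i)"
begin

definition part_of :: "'a \<Rightarrow> nat" where
  "part_of x = (THE i. i \<in> {1..k} \<and> x \<in> U i)"

lemma part_of_eq: "i \<in> {1..k} \<Longrightarrow> x \<in> U i \<Longrightarrow> part_of x = i"
  unfolding part_of_def using U_disjoint by (intro the_equality) blast+

lemma part_of_in: "x \<in> V \<Longrightarrow> part_of x \<in> {1..k}"
  and in_part_of: "x \<in> V \<Longrightarrow> x \<in> U (part_of x)"
  using part_of_eq V_eq by auto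

lemma in_V: "i \<in> {1..k} \<Longrightarrow> x \<in> U i \<Longrightarrow> x \<in> V"
  using V_eq by auto

lemma in_U_iff: "x \<in> V \<Longrightarrow> i \<in> {1..k} \<Longrightarrow> x \<in> U i \<longleftrightarrow> part_of x = i"
  using part_of_eq in_part_of by blast

lemma center_in_U: "valid_centers k U c \<Longrightarrow> i \<in> {1..k} \<Longrightarrow> c i \<in> U i"
  unfolding valid_centers_def by blast

lemma part_of_center: "valid_centers k U c \<Longrightarrow> i \<in> {1..k} \<Longrightarrow> part_of (c i) = i"
  using part_of_eq center_in_U by blast

lemma valid_centers_update:
  "valid_centers k U c \<Longrightarrow> v \<in> V \<Longrightarrow> valid_centers k U (c(part_of v := v))"
  using in_part_of center_in_U unfolding valid_centers_def by auto

lemma exists_valid_centers: "\<exists>c. valid_centers k U c"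
proof -
  have "U i \<noteq> {}" if "i \<in> {1..k}" for i
    using n_ge_2[OF that] card_U[OF that] by auto
  then have "valid_centers k U (\<lambda>i. SOME x. x \<in> U i)"
    unfolding valid_centers_def by (simp add: some_in_eq)
  then show ?thesis by blast
qed

definition valid_central :: "central_type \<Rightarrow> bool" where
  "valid_central ct \<longleftrightarrow> (\<forall>j. ct = StarToward j \<longrightarrow> j \<in> {1..k})"

lemma valid_central_Complete: "valid_central Complete"
  and valid_central_StarToward: "valid_central (StarToward j) \<longleftrightarrow> j \<in> {1..k}"
  unfolding valid_central_def by auto

lemma valid_central_StarTowardI: "j \<in> {1..k} \<Longrightarrow> valid_central (StarToward j)"
  by (simp add: valid_central_StarToward)

definition is_rep :: "(nat \<Rightarrow> part_type) \<Rightarrow> (nat \<Rightarrow> 'a) \<Rightarrow> 'a \<Rightarrow> bool" where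
  "is_rep t c x \<longleftrightarrow> (t (part_of x) = PSS \<longrightarrow> x = c (part_of x))"

definition gamma_adj :: "central_type \<Rightarrow> (nat \<Rightarrow> part_type) \<Rightarrow> (nat \<Rightarrow> 'a) \<Rightarrow> 'a \<Rightarrow> 'a \<Rightarrow> bool" where
  "gamma_adj ct t c x y =
    (if part_of x = part_of y
     then t (part_of x) = PC \<or> (t (part_of x) = PSS \<and> (x = c (part_of x) \<or> y = c (part_of x)))
     else is_rep t c x \<and> is_rep t c y \<and> parts_adjacent ct (part_of x) (part_of y))"

lemma symp_gamma_adj: "symp (gamma_adj ct t c)"
  unfolding symp_def gamma_adj_def using parts_adjacent_commute by auto

lemma doubleton_in_intra_edges:
  assumes c: "valid_centers k U c" and i: "i \<in> {1..k}" and xy: "x \<in> V" "y \<in> V" "x \<noteq> y"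
  shows "{x, y} \<in> intra_edges t c U i \<longleftrightarrow> part_of x = i \<and> part_of y = i \<and>
    (t i = PC \<or> (t i = PSS \<and> (x = c i \<or> y = c i)))"
proof (cases "t i")
  case PSS
  have "c i \<in> V" "part_of (c i) = i"
    using center_in_U[OF c i] i in_V part_of_eq by auto
  then show ?thesis
    using PSS xy i unfolding intra_edges_def
    by (auto simp: in_U_iff doubleton_eq_iff)
qed (use xy i in \<open>simp_all add: intra_edges_def doubleton_in_pairs_in in_U_iff\<close>)

lemma in_rep_set_iff:
  "valid_centers k U c \<Longrightarrow> i \<in> {1..k} \<Longrightarrow> z \<in> rep_set t c U i \<longleftrightarrow> z \<in> U i \<and> is_rep t c z"
  using part_of_eq center_in_U unfolding rep_set_def is_rep_def by auto

lemma doubleton_in_inter_edges: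
  assumes c: "valid_centers k U c" and ct: "valid_central ct"
    and xy: "x \<in> V" "y \<in> V" "x \<noteq> y"
  shows "{x, y} \<in> inter_edges k ct t c U \<longleftrightarrow> part_of x \<noteq> part_of y \<and>
    is_rep t c x \<and> is_rep t c y \<and> parts_adjacent ct (part_of x) (part_of y)"
    (is "?edge \<longleftrightarrow> ?adj")
proof
  assume ?edge
  then obtain a b i l where "{x, y} = {a, b}" "i \<in> {1..k}" "l \<in> {1..k}" "i \<noteq> l"
    "a \<in> U i" "is_rep t c a" "b \<in> U l" "is_rep t c b" "parts_adjacent ct i l"
    using ct by (cases ct) (auto simp: inter_edges_def in_rep_set_iff[OF c] valid_central_StarToward)
  then show ?adj
    using part_of_eq parts_adjacent_commute by (auto simp: doubleton_eq_iff)
next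
  assume adj: ?adj
  have reps: "x \<in> rep_set t c U (part_of x)" "y \<in> rep_set t c U (part_of y)"
    using adj xy in_rep_set_iff[OF c] part_of_in in_part_of by auto
  show ?edge
  proof (cases ct)
    case Complete
    then show ?thesis
      unfolding inter_edges_def Complete central_type.case mem_Collect_eq
      using adj reps part_of_in xy
      by (intro exI[of _ x] exI[of _ y] exI[of _ "part_of x"] exI[of _ "part_of y"]) auto
  next
    case (StarToward j)
    consider "part_of y = j" | "part_of x = j"
      using adj StarToward by auto
    then show ?thesis
    proof cases
      case 1
      then show ?thesis
        unfolding inter_edges_def StarToward central_type.case mem_Collect_eq
        using adj reps part_of_in xy by (intro exI[of _ x] exI[of _ y] exI[of _ "part_of x"]) auto
    next
      case 2
      then show ?thesis
        unfolding inter_edges_def StarToward central_type.case mem_Collect_eq insert_commute[of x]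
        using adj reps part_of_in xy by (intro exI[of _ y] exI[of _ x] exI[of _ "part_of y"]) auto
    qed
  qed
qed

lemma Gamma_eq_edges_on:
  assumes c: "valid_centers k U c" and ct: "valid_central ct"
  shows "Gamma k U ct t c = edges_on V (gamma_adj ct t c)"
proof (rule doubleton_sets_eqI)
  let ?D = "{{x, y} | x y. x \<in> V \<and> y \<in> V \<and> x \<noteq> y}"
  have "intra_edges t c U i \<subseteq> ?D" if i: "i \<in> {1..k}" for i
    using center_in_U[OF c i] in_V[OF i]
    by (cases "t i") (auto simp: intra_edges_def pairs_in_def)
  moreover have "inter_edges k ct t c U \<subseteq> ?D"
  proof -
    have "a \<noteq> b" if "i \<in> {1..k}" "l \<in> {1..k}" "i \<noteq> l" "a \<in> U i" "b \<in> U l" for a b i l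
      using U_disjoint that by blast
    then show ?thesis
      using in_rep_set_iff[OF c] in_V ct unfolding inter_edges_def valid_central_def
      by (cases ct) (simp; blast)+
  qed
  moreover have "edges_on V (gamma_adj ct t c) \<subseteq> ?D"
    unfolding edges_on_def by blast
  ultimately show "Gamma k U ct t c \<union> edges_on V (gamma_adj ct t c) \<subseteq> ?D"
    unfolding Gamma_def by blast
next
  fix x y assume xy: "x \<in> V" "y \<in> V" "x \<noteq> y"
  have intra: "{x, y} \<in> (\<Union>i\<in>{1..k}. intra_edges t c U i) \<longleftrightarrow> part_of x = part_of y \<and>
      (t (part_of x) = PC \<or> (t (part_of x) = PSS \<and> (x = c (part_of x) \<or> y = c (part_of x))))"
    using doubleton_in_intra_edges[OF c _ xy] part_of_in[OF xy(1)] by auto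
  have inter: "{x, y} \<in> inter_edges k ct t c U \<longleftrightarrow> part_of x \<noteq> part_of y \<and>
    is_rep t c x \<and> is_rep t c y \<and> parts_adjacent ct (part_of x) (part_of y)"
    by (rule doubleton_in_inter_edges[OF c ct xy])
  show "{x, y} \<in> Gamma k U ct t c \<longleftrightarrow> {x, y} \<in> edges_on V (gamma_adj ct t c)"
    unfolding Gamma_def Un_iff intra inter
      doubleton_in_edges_on[OF symp_gamma_adj] gamma_adj_def
    using xy by auto
qed

lemma Gamma_cong:
  assumes c: "valid_centers k U c" and ct: "valid_central ct"
    and t: "\<And>i. i \<in> {1..k} \<Longrightarrow> t i = t' i"
  shows "Gamma k U ct t c = Gamma k U ct t' c"
  unfolding Gamma_eq_edges_on[OF c ct]
  by (rule edges_on_cong) (simp add: gamma_adj_def is_rep_def t[OF part_of_in])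

section \<open>Local complementation of \<open>\<Gamma>\<close>-graphs\<close>

(*
  The premises about part_of are the facts that the transition lemmas below need: each of
  them is a finite case distinction on the types of the parts of x, y and v, which smt settles
  once gamma_adj is unfolded.
*)
lemma local_comp_Gamma_eqI:
  assumes c: "valid_centers k U c" "valid_centers k U c'"
    and ct: "valid_central ct" "valid_central ct'"
    and v: "v \<in> V"
    and adj: "\<And>x y. x \<in> V \<Longrightarrow> y \<in> V \<Longrightarrow> x \<noteq> y \<Longrightarrow>
      part_of x \<in> {1..k} \<Longrightarrow> part_of y \<in> {1..k} \<Longrightarrow> part_of v \<in> {1..k} \<Longrightarrow>
      part_of (c (part_of x)) = part_of x \<Longrightarrow> part_of (c (part_of y)) = part_of y \<Longrightarrow>
      part_of (c (part_of v)) = part_of v \<Longrightarrow>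
      (gamma_adj ct t c x y \<noteq> (x \<noteq> v \<and> y \<noteq> v \<and> gamma_adj ct t c v x \<and> gamma_adj ct t c v y))
      = gamma_adj ct' t' c' x y"
  shows "local_comp (Gamma k U ct t c) v = Gamma k U ct' t' c'"
  unfolding Gamma_eq_edges_on[OF c(1) ct(1)] Gamma_eq_edges_on[OF c(2) ct(2)]
    local_comp_edges_on[OF symp_gamma_adj v]
  using adj part_of_in part_of_center[OF c(1)] v by (intro edges_on_cong) auto

lemma local_comp_at_leaf:
  assumes c: "valid_centers k U c" and ct: "valid_central ct" and v: "v \<in> V"
    and leaf: "t (part_of v) = PSS" "v \<noteq> c (part_of v)"
  shows "local_comp (Gamma k U ct t c) v = Gamma k U ct t c"
  using c c ct ct v
  by (rule local_comp_Gamma_eqI)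
    (unfold gamma_adj_def is_rep_def, smt (verit) leaf part_type.distinct part_type_cases_disj)

lemma local_comp_complete_at_independent:
  assumes c: "valid_centers k U c" and v: "v \<in> V"
    and tv: "t (part_of v) = PSC" and no_clique: "\<forall>i\<in>{1..k}. t i \<noteq> PC"
  shows "local_comp (Gamma k U Complete t c) v =
    Gamma k U (StarToward (part_of v)) ((toggle_clique \<circ> t)(part_of v := PSC)) c"
  using c c valid_central_Complete valid_central_StarTowardI[OF part_of_in[OF v]] v
  by (rule local_comp_Gamma_eqI)
    (unfold gamma_adj_def is_rep_def parts_adjacent.simps fun_upd_def comp_def,
      smt (verit) tv no_clique toggle_clique.simps part_type.distinct part_type_cases_disj)

lemma local_comp_complete_at_center:
  assumes c: "valid_centers k U c" and v: "v \<in> V"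
    and tv: "t (part_of v) = PSS" "v = c (part_of v)" and no_clique: "\<forall>i\<in>{1..k}. t i \<noteq> PC"
  shows "local_comp (Gamma k U Complete t c) v =
    Gamma k U (StarToward (part_of v)) ((toggle_clique \<circ> t)(part_of v := PC)) c"
  using c c valid_central_Complete valid_central_StarTowardI[OF part_of_in[OF v]] v
  by (rule local_comp_Gamma_eqI)
    (unfold gamma_adj_def is_rep_def parts_adjacent.simps fun_upd_def comp_def,
      smt (verit) tv no_clique toggle_clique.simps part_type.distinct part_type_cases_disj)

lemma local_comp_star_at_clique_hub:
  assumes c: "valid_centers k U c" and v: "v \<in> V" and j: "part_of v = j"
    and tj: "t j = PC" and no_independent: "\<forall>i\<in>{1..k}. i \<noteq> j \<longrightarrow> t i \<noteq> PSC"
  shows "local_comp (Gamma k U (StarToward j) t c) v =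
    Gamma k U Complete ((toggle_clique \<circ> t)(j := PSS)) (c(j := v))"
  using c valid_centers_update[OF c v, unfolded j]
    valid_central_StarTowardI[OF part_of_in[OF v, unfolded j]] valid_central_Complete v
  by (rule local_comp_Gamma_eqI)
    (unfold gamma_adj_def is_rep_def parts_adjacent.simps fun_upd_def comp_def,
      smt (verit) j tj no_independent toggle_clique.simps part_type.distinct part_type_cases_disj)

lemma local_comp_star_at_independent_hub:
  assumes c: "valid_centers k U c" and v: "v \<in> V" and j: "part_of v = j"
    and tj: "t j = PSC" and no_independent: "\<forall>i\<in>{1..k}. i \<noteq> j \<longrightarrow> t i \<noteq> PSC"
  shows "local_comp (Gamma k U (StarToward j) t c) v =
    Gamma k U Complete ((toggle_clique \<circ> t)(j := PSC)) c"
  using c c valid_central_StarTowardI[OF part_of_in[OF v, unfolded j]] valid_central_Complete v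
  by (rule local_comp_Gamma_eqI)
    (unfold gamma_adj_def is_rep_def parts_adjacent.simps fun_upd_def comp_def,
      smt (verit) j tj no_independent toggle_clique.simps part_type.distinct part_type_cases_disj)

lemma local_comp_star_at_clique_leaf:
  assumes c: "valid_centers k U c" and v: "v \<in> V" and j: "j \<in> {1..k}" "part_of v \<noteq> j"
    and tv: "t (part_of v) = PC" and tj: "t j \<noteq> PSS"
    and no_independent: "\<forall>i\<in>{1..k}. i \<noteq> j \<longrightarrow> t i \<noteq> PSC"
  shows "local_comp (Gamma k U (StarToward j) t c) v =
    Gamma k U (StarToward j) (t(j := toggle_clique (t j), part_of v := PSS)) (c(part_of v := v))"
  using c valid_centers_update[OF c v] valid_central_StarTowardI[OF j(1)]
    valid_central_StarTowardI[OF j(1)] v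
  by (rule local_comp_Gamma_eqI)
    (unfold gamma_adj_def is_rep_def parts_adjacent.simps fun_upd_def,
      smt (verit) j tv tj no_independent toggle_clique.simps part_type.distinct part_type_cases_disj)

lemma local_comp_star_at_leaf_center:
  assumes c: "valid_centers k U c" and v: "v \<in> V" and j: "j \<in> {1..k}" "part_of v \<noteq> j"
    and tv: "t (part_of v) = PSS" "v = c (part_of v)" and tj: "t j \<noteq> PSS"
    and no_independent: "\<forall>i\<in>{1..k}. i \<noteq> j \<longrightarrow> t i \<noteq> PSC"
  shows "local_comp (Gamma k U (StarToward j) t c) v =
    Gamma k U (StarToward j) (t(j := toggle_clique (t j), part_of v := PC)) c"
  using c c valid_central_StarTowardI[OF j(1)] valid_central_StarTowardI[OF j(1)] v
  by (rule local_comp_Gamma_eqI)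
    (unfold gamma_adj_def is_rep_def parts_adjacent.simps fun_upd_def,
      smt (verit) j tv tj no_independent toggle_clique.simps part_type.distinct part_type_cases_disj)

section \<open>The orbit of the complete multipartite graph\<close>

definition ss_count :: "(nat \<Rightarrow> part_type) \<Rightarrow> nat" where
  "ss_count t = card {i \<in> {1..k}. t i = PSS}"

lemma ss_count_cong:
  "(\<And>i. i \<in> {1..k} \<Longrightarrow> t' i = PSS \<longleftrightarrow> t i = PSS) \<Longrightarrow> ss_count t' = ss_count t"
  unfolding ss_count_def by (intro arg_cong[where f = card] Collect_cong) auto

lemma even_ss_count_flip:
  assumes "p \<in> {1..k}" "\<And>i. i \<in> {1..k} \<Longrightarrow> i \<noteq> p \<Longrightarrow> t' i = PSS \<longleftrightarrow> t i = PSS"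
    and "t' p = PSS \<longleftrightarrow> t p \<noteq> PSS"
  shows "even (ss_count t') \<longleftrightarrow> odd (ss_count t)"
  unfolding ss_count_def using assms by (intro even_card_filter_toggle) auto

(*
  The parity clauses separate the two parities of k: they exclude Gamma(complete; all ss)
  for odd k and the star with an independent hub and ss leaves for even k.
*)
definition admissible :: "central_type \<Rightarrow> (nat \<Rightarrow> part_type) \<Rightarrow> bool" where
  "admissible ct t \<longleftrightarrow> (case ct of
      Complete \<Rightarrow> (\<forall>i\<in>{1..k}. t i \<noteq> PC) \<and> even (ss_count t)
    | StarToward j \<Rightarrow> j \<in> {1..k} \<and> t j \<noteq> PSS \<and> (\<forall>i\<in>{1..k}. i \<noteq> j \<longrightarrow> t i \<noteq> PSC) \<and>
        (t j = PC \<longleftrightarrow> odd (ss_count t)))"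

definition admissible_Gamma :: "'a set set \<Rightarrow> bool" where
  "admissible_Gamma E \<longleftrightarrow>
    (\<exists>ct t c. valid_centers k U c \<and> admissible ct t \<and> E = Gamma k U ct t c)"

lemma admissible_GammaI:
  "valid_centers k U c \<Longrightarrow> admissible ct t \<Longrightarrow> admissible_Gamma (Gamma k U ct t c)"
  unfolding admissible_Gamma_def by blast

lemma admissible_Gamma_local_comp_complete:
  assumes c: "valid_centers k U c" and adm: "admissible Complete t" and v: "v \<in> V"
  shows "admissible_Gamma (local_comp (Gamma k U Complete t c) v)"
proof -
  define p where "p = part_of v"
  have p: "p \<in> {1..k}"
    unfolding p_def using part_of_in[OF v] .
  have no_clique: "\<forall>i\<in>{1..k}. t i \<noteq> PC" and even: "even (ss_count t)"
    using adm unfolding admissible_def by auto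
  consider "t p = PSC" | "t p = PSS" "v = c p" | "t p = PSS" "v \<noteq> c p"
    using no_clique p by (cases "t p") auto
  then show ?thesis
  proof cases
    case 1
    have "ss_count ((toggle_clique \<circ> t)(p := PSC)) = ss_count t"
      using 1 by (intro ss_count_cong) auto
    then have "admissible (StarToward p) ((toggle_clique \<circ> t)(p := PSC))"
      unfolding admissible_def using p no_clique even by (auto elim: toggle_clique.elims)
    then show ?thesis
      using local_comp_complete_at_independent[OF c v 1[unfolded p_def] no_clique] c
      unfolding p_def by (auto intro: admissible_GammaI)
  next
    case 2
    have "even (ss_count ((toggle_clique \<circ> t)(p := PC))) \<longleftrightarrow> odd (ss_count t)"
      using 2 p by (intro even_ss_count_flip) auto
    then have "admissible (StarToward p) ((toggle_clique \<circ> t)(p := PC))"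
      unfolding admissible_def using p no_clique even by (auto elim: toggle_clique.elims)
    then show ?thesis
      using local_comp_complete_at_center[OF c v 2[unfolded p_def] no_clique] c
      unfolding p_def by (auto intro: admissible_GammaI)
  next
    case 3
    then show ?thesis
      using local_comp_at_leaf[OF c valid_central_Complete v] c adm
      unfolding p_def by (auto intro: admissible_GammaI)
  qed
qed

lemma admissible_Gamma_local_comp_at_hub:
  assumes c: "valid_centers k U c" and adm: "admissible (StarToward j) t"
    and v: "v \<in> V" "part_of v = j"
  shows "admissible_Gamma (local_comp (Gamma k U (StarToward j) t c) v)"
proof -
  have j: "j \<in> {1..k}" and tj: "t j \<noteq> PSS"
    and no_independent: "\<forall>i\<in>{1..k}. i \<noteq> j \<longrightarrow> t i \<noteq> PSC"
    and hub: "t j = PC \<longleftrightarrow> odd (ss_count t)"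
    using adm unfolding admissible_def by auto
  show ?thesis
  proof (cases "t j")
    case PC
    have "even (ss_count ((toggle_clique \<circ> t)(j := PSS))) \<longleftrightarrow> odd (ss_count t)"
      using PC j by (intro even_ss_count_flip) auto
    then have "admissible Complete ((toggle_clique \<circ> t)(j := PSS))"
      unfolding admissible_def using no_independent hub PC by (auto elim: toggle_clique.elims)
    then show ?thesis
      using local_comp_star_at_clique_hub[OF c v PC no_independent]
        valid_centers_update[OF c v(1)] v(2) by (auto intro: admissible_GammaI)
  next
    case PSC
    have "ss_count ((toggle_clique \<circ> t)(j := PSC)) = ss_count t"
      using PSC by (intro ss_count_cong) auto
    then have "admissible Complete ((toggle_clique \<circ> t)(j := PSC))"
      unfolding admissible_def using no_independent hub PSC by (auto elim: toggle_clique.elims)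
    then show ?thesis
      using local_comp_star_at_independent_hub[OF c v PSC no_independent] c
      by (auto intro: admissible_GammaI)
  qed (use tj in simp)
qed

lemma admissible_Gamma_local_comp_at_leaf:
  assumes c: "valid_centers k U c" and adm: "admissible (StarToward j) t"
    and v: "v \<in> V" "part_of v \<noteq> j"
  shows "admissible_Gamma (local_comp (Gamma k U (StarToward j) t c) v)"
proof -
  define p where "p = part_of v"
  have p: "p \<in> {1..k}" "p \<noteq> j"
    unfolding p_def using part_of_in[OF v(1)] v(2) .
  have j: "j \<in> {1..k}" and tj: "t j \<noteq> PSS"
    and no_independent: "\<forall>i\<in>{1..k}. i \<noteq> j \<longrightarrow> t i \<noteq> PSC"
    and hub: "t j = PC \<longleftrightarrow> odd (ss_count t)"
    using adm unfolding admissible_def by auto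
  consider "t p = PC" | "t p = PSS" "v = c p" | "t p = PSS" "v \<noteq> c p"
    using no_independent p by (cases "t p") auto
  then show ?thesis
  proof cases
    case 1
    let ?t = "t(j := toggle_clique (t j), p := PSS)"
    have "even (ss_count ?t) \<longleftrightarrow> odd (ss_count t)"
      using 1 p by (intro even_ss_count_flip) auto
    then have "admissible (StarToward j) ?t"
      unfolding admissible_def using j tj no_independent hub 1 p by (cases "t j") auto
    then show ?thesis
      using local_comp_star_at_clique_leaf[OF c v(1) j v(2) 1[unfolded p_def] tj no_independent]
        valid_centers_update[OF c v(1)] unfolding p_def by (auto intro: admissible_GammaI)
  next
    case 2
    let ?t = "t(j := toggle_clique (t j), p := PC)"
    have "even (ss_count ?t) \<longleftrightarrow> odd (ss_count t)"
      using 2 p by (intro even_ss_count_flip) auto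
    then have "admissible (StarToward j) ?t"
      unfolding admissible_def using j tj no_independent hub 2 p by (cases "t j") auto
    then show ?thesis
      using local_comp_star_at_leaf_center[OF c v(1) j v(2) 2[unfolded p_def] tj no_independent] c
      unfolding p_def by (auto intro: admissible_GammaI)
  next
    case 3
    then show ?thesis
      using local_comp_at_leaf[OF c _ v(1)] c adm j
      unfolding p_def by (auto intro: admissible_GammaI simp: valid_central_StarToward)
  qed
qed

lemma admissible_Gamma_local_comp:
  assumes "admissible_Gamma E" "v \<in> V"
  shows "admissible_Gamma (local_comp E v)"
proof -
  obtain ct t c where c: "valid_centers k U c" and adm: "admissible ct t"
    and E: "E = Gamma k U ct t c"
    using assms(1) unfolding admissible_Gamma_def by blast
  show ?thesis
  proof (cases ct)
    case Complete
    then show ?thesis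
      using admissible_Gamma_local_comp_complete[OF c _ assms(2)] adm E by simp
  next
    case (StarToward j)
    then show ?thesis
      using admissible_Gamma_local_comp_at_hub[OF c _ assms(2)]
        admissible_Gamma_local_comp_at_leaf[OF c _ assms(2)] adm E
      by (cases "part_of v = j") simp_all
  qed
qed

abbreviation orbit :: "'a set set set" where
  "orbit \<equiv> lc_orbit V (complete_multipartite k U)"

lemma lc_orbit_admissible_Gamma:
  assumes "E \<in> orbit"
  shows "admissible_Gamma E"
  using assms
proof (induction rule: lc_orbit.induct)
  case base
  obtain c where "valid_centers k U c"
    using exists_valid_centers by blast
  moreover have "admissible Complete (\<lambda>_. PSC)"
    unfolding admissible_def ss_count_def by simp
  ultimately show ?case
    unfolding complete_multipartite_eq_Gamma[of k U c] by (rule admissible_GammaI)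
next
  case (step H v)
  then show ?case
    using admissible_Gamma_local_comp by blast
qed

(*
  Complementing K at the centre of part j gives the star toward j with an independent hub and
  clique leaves; complementing at the centre of a clique leaf turns it into an ss leaf and
  toggles the hub.
*)
lemma star_in_orbit:
  assumes c: "valid_centers k U c" and j: "j \<in> {1..k}"
    and S: "finite S" "S \<subseteq> {1..k} - {j}"
  shows "Gamma k U (StarToward j)
    (\<lambda>i. if i = j then (if even (card S) then PSC else PC) else if i \<in> S then PSS else PC) c \<in> orbit"
  using S
proof (induction S rule: finite_induct)
  case empty
  have cj: "c j \<in> V" "part_of (c j) = j"
    using center_in_U[OF c j] in_V[OF j] part_of_center[OF c j] by auto
  have "(toggle_clique \<circ> (\<lambda>_. PSC))(j := PSC) = (\<lambda>i. if i = j then PSC else PC)"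
    by (auto simp: fun_eq_iff)
  then have "local_comp (complete_multipartite k U) (c j) =
      Gamma k U (StarToward j) (\<lambda>i. if i = j then PSC else PC) c"
    unfolding complete_multipartite_eq_Gamma[of k U c]
    using local_comp_complete_at_independent[OF c cj(1)] cj(2) by simp
  moreover have "local_comp (complete_multipartite k U) (c j) \<in> orbit"
    by (rule lc_orbit.step[OF lc_orbit.base cj(1)])
  ultimately show ?case
    by (simp cong: if_cong)
next
  case (insert l S)
  let ?t = "\<lambda>i. if i = j then (if even (card S) then PSC else PC) else if i \<in> S then PSS else PC"
  have l: "l \<in> {1..k}" "l \<noteq> j"
    using insert.prems by auto
  have cl: "c l \<in> V" "part_of (c l) = l"
    using center_in_U[OF c l(1)] in_V[OF l(1)] part_of_center[OF c l(1)] by auto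
  have "local_comp (Gamma k U (StarToward j) ?t c) (c l) =
      Gamma k U (StarToward j) (?t(j := toggle_clique (?t j), l := PSS)) (c(l := c l))"
    using local_comp_star_at_clique_leaf[OF c cl(1) j, of ?t] cl(2) l insert.hyps(2) by auto
  also have "?t(j := toggle_clique (?t j), l := PSS) =
      (\<lambda>i. if i = j then (if even (card (insert l S)) then PSC else PC)
        else if i \<in> insert l S then PSS else PC)"
    using insert.hyps l by auto
  finally show ?case
    using lc_orbit.step[OF insert.IH cl(1)] insert.prems by simp
qed

lemma star_all_ss_in_orbit:
  assumes c: "valid_centers k U c" and j: "j \<in> {1..k}"
  shows "(if even k then Gamma2 k U j c else Gamma3 k U j c) \<in> orbit"
proof -
  have "k \<ge> 1"
    using j by simp
  have "(if even k then Gamma2 k U j c else Gamma3 k U j c) =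
      Gamma k U (StarToward j) (\<lambda>i. if i = j then (if even k then PC else PSC) else PSS) c"
    unfolding Gamma2_def Gamma3_def by simp
  also have "\<dots> = Gamma k U (StarToward j)
        (\<lambda>i. if i = j then (if even (card ({1..k} - {j})) then PSC else PC)
          else if i \<in> {1..k} - {j} then PSS else PC) c"
    using c j \<open>k \<ge> 1\<close> by (intro Gamma_cong) (auto simp: valid_central_StarToward)
  finally show ?thesis
    using star_in_orbit[OF c j, of "{1..k} - {j}"] by simp
qed

lemma Gamma1_in_orbit:
  assumes c: "valid_centers k U c" and k: "even k" "k \<ge> 1"
  shows "Gamma1 k U c \<in> orbit"
proof -
  have one: "1 \<in> {1..k}"
    using k by simp
  have c1: "c 1 \<in> V" "part_of (c 1) = 1"
    using center_in_U[OF c one] in_V[OF one] part_of_center[OF c one] by auto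
  let ?t = "\<lambda>i. if i = 1 then PC else PSS"
  have "Gamma k U (StarToward 1) ?t c \<in> orbit"
    using k(1) star_all_ss_in_orbit[OF c one] unfolding Gamma2_def by simp
  have "local_comp (Gamma k U (StarToward 1) ?t c) (c 1) =
      Gamma k U Complete ((toggle_clique \<circ> ?t)(1 := PSS)) (c(1 := c 1))"
    by (rule local_comp_star_at_clique_hub[OF c c1]) auto
  also have "(toggle_clique \<circ> ?t)(1 := PSS) = (\<lambda>i. PSS)"
    by (auto simp: fun_eq_iff)
  also have "c(1 := c 1) = c"
    by simp
  finally show ?thesis
    using lc_orbit.step[OF \<open>Gamma k U (StarToward 1) ?t c \<in> orbit\<close> c1(1)]
    unfolding Gamma1_def by simp
qed

section \<open>Counting edges\<close>

definition rep_count :: "(nat \<Rightarrow> part_type) \<Rightarrow> nat \<Rightarrow> nat" where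
  "rep_count t i = (if t i = PSS then 1 else n i)"

definition inner_degree_sum :: "(nat \<Rightarrow> part_type) \<Rightarrow> nat \<Rightarrow> nat" where
  "inner_degree_sum t i = (case t i of PC \<Rightarrow> n i * (n i - 1) | PSC \<Rightarrow> 0 | PSS \<Rightarrow> 2 * (n i - 1))"

definition outer_degree :: "central_type \<Rightarrow> (nat \<Rightarrow> part_type) \<Rightarrow> nat \<Rightarrow> nat" where
  "outer_degree ct t i = (\<Sum>l\<in>{1..k} - {i}. if parts_adjacent ct i l then rep_count t l else 0)"

lemma card_neighbours_in_own_part:
  assumes c: "valid_centers k U c" and i: "i \<in> {1..k}" and x: "x \<in> U i"
  shows "card {y \<in> U i. y \<noteq> x \<and> gamma_adj ct t c x y} =
    (case t i of PC \<Rightarrow> n i - 1 | PSC \<Rightarrow> 0 | PSS \<Rightarrow> if x = c i then n i - 1 else 1)"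
proof -
  have "gamma_adj ct t c x y \<longleftrightarrow> t i = PC \<or> (t i = PSS \<and> (x = c i \<or> y = c i))" if "y \<in> U i" for y
    using part_of_eq[OF i] x that unfolding gamma_adj_def by simp
  then have "{y \<in> U i. y \<noteq> x \<and> gamma_adj ct t c x y} =
      {y \<in> U i. y \<noteq> x \<and> (t i = PC \<or> (t i = PSS \<and> (x = c i \<or> y = c i)))}"
    by blast
  also have "\<dots> =
      (case t i of PC \<Rightarrow> U i - {x} | PSC \<Rightarrow> {} | PSS \<Rightarrow> if x = c i then U i - {x} else {c i})"
    using x center_in_U[OF c i] by (cases "t i") auto
  finally have nbrs: "{y \<in> U i. y \<noteq> x \<and> gamma_adj ct t c x y} =
      (case t i of PC \<Rightarrow> U i - {x} | PSC \<Rightarrow> {} | PSS \<Rightarrow> if x = c i then U i - {x} else {c i})" .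
  show ?thesis
    unfolding nbrs using x finite_U[OF i] card_U[OF i] by (cases "t i") auto
qed

lemma card_reps:
  assumes c: "valid_centers k U c" and l: "l \<in> {1..k}"
  shows "card {y \<in> U l. is_rep t c y} = rep_count t l"
proof -
  have "{y \<in> U l. is_rep t c y} = (if t l = PSS then {c l} else U l)"
    using center_in_U[OF c l] part_of_eq[OF l] unfolding is_rep_def by auto
  then show ?thesis
    unfolding rep_count_def using card_U[OF l] by simp
qed

lemma card_neighbours_in_other_part:
  assumes c: "valid_centers k U c" and x: "x \<in> V" and l: "l \<in> {1..k}" "l \<noteq> part_of x"
  shows "card {y \<in> U l. y \<noteq> x \<and> gamma_adj ct t c x y} =
    (if is_rep t c x \<and> parts_adjacent ct (part_of x) l then rep_count t l else 0)"
proof -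
  have "{y \<in> U l. y \<noteq> x \<and> gamma_adj ct t c x y} =
      (if is_rep t c x \<and> parts_adjacent ct (part_of x) l then {y \<in> U l. is_rep t c y} else {})"
    using part_of_eq[OF l(1)] l(2) unfolding gamma_adj_def by auto
  then show ?thesis
    using card_reps[OF c l(1)] by simp
qed

lemma degree_Gamma:
  assumes c: "valid_centers k U c" and x: "x \<in> V"
  shows "card {y \<in> V. y \<noteq> x \<and> gamma_adj ct t c x y} =
    card {y \<in> U (part_of x). y \<noteq> x \<and> gamma_adj ct t c x y} +
    (if is_rep t c x then outer_degree ct t (part_of x) else 0)"
proof -
  let ?N = "\<lambda>l. {y \<in> U l. y \<noteq> x \<and> gamma_adj ct t c x y}"
  have px: "part_of x \<in> {1..k}"
    using part_of_in[OF x] .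
  have "{y \<in> V. y \<noteq> x \<and> gamma_adj ct t c x y} = (\<Union>l\<in>{1..k}. ?N l)"
    unfolding V_eq by blast
  then have "card {y \<in> V. y \<noteq> x \<and> gamma_adj ct t c x y} = (\<Sum>l\<in>{1..k}. card (?N l))"
    using finite_U U_disjoint by (simp add: card_UN_disjoint disjoint_iff)
  also have "\<dots> = card (?N (part_of x)) + (\<Sum>l\<in>{1..k} - {part_of x}. card (?N l))"
    using px by (simp add: sum.remove)
  also have "(\<Sum>l\<in>{1..k} - {part_of x}. card (?N l)) =
      (if is_rep t c x then outer_degree ct t (part_of x) else 0)"
    unfolding outer_degree_def using card_neighbours_in_other_part[OF c x] by (simp add: sum.neutral)
  finally show ?thesis .
qed

lemma sum_inner_degrees:
  assumes c: "valid_centers k U c" and i: "i \<in> {1..k}"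
  shows "(\<Sum>x\<in>U i. card {y \<in> U i. y \<noteq> x \<and> gamma_adj ct t c x y}) = inner_degree_sum t i"
proof -
  have fin: "finite (U i)" and ci: "c i \<in> U i"
    using finite_U[OF i] center_in_U[OF c i] .
  show ?thesis
  proof (cases "t i")
    case PSS
    have "(\<Sum>x\<in>U i. if x = c i then n i - 1 else 1) = (n i - 1) + (\<Sum>x\<in>U i - {c i}. 1)"
      using fin ci by (simp add: sum.remove)
    then show ?thesis
      using PSS fin ci card_U[OF i]
      by (simp add: card_neighbours_in_own_part[OF c i] inner_degree_sum_def)
  qed (simp_all add: card_neighbours_in_own_part[OF c i] inner_degree_sum_def card_U[OF i])
qed

lemma sum_degrees_part:
  assumes c: "valid_centers k U c" and i: "i \<in> {1..k}"
  shows "(\<Sum>x\<in>U i. card {y \<in> V. y \<noteq> x \<and> gamma_adj ct t c x y}) =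
    inner_degree_sum t i + rep_count t i * outer_degree ct t i"
proof -
  have part: "x \<in> V" "part_of x = i" if "x \<in> U i" for x
    using in_V[OF i that] part_of_eq[OF i that] by auto
  have "(\<Sum>x\<in>U i. card {y \<in> V. y \<noteq> x \<and> gamma_adj ct t c x y}) =
      (\<Sum>x\<in>U i. card {y \<in> U i. y \<noteq> x \<and> gamma_adj ct t c x y}) +
      (\<Sum>x\<in>U i. if is_rep t c x then outer_degree ct t i else 0)"
    unfolding sum.distrib[symmetric] by (rule sum.cong) (simp_all add: degree_Gamma[OF c] part)
  also have "(\<Sum>x\<in>U i. if is_rep t c x then outer_degree ct t i else 0) =
      card {x \<in> U i. is_rep t c x} * outer_degree ct t i"
    using finite_U[OF i] by (simp add: sum.If_cases Int_def)
  finally show ?thesis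
    by (simp add: sum_inner_degrees[OF c i] card_reps[OF c i])
qed

lemma double_card_Gamma:
  assumes c: "valid_centers k U c" and ct: "valid_central ct"
  shows "2 * card (Gamma k U ct t c) =
    (\<Sum>i\<in>{1..k}. inner_degree_sum t i + rep_count t i * outer_degree ct t i)"
proof -
  have "finite V"
    using finite_U V_eq by auto
  then have "2 * card (Gamma k U ct t c) = (\<Sum>x\<in>V. card {y \<in> V. y \<noteq> x \<and> gamma_adj ct t c x y})"
    unfolding Gamma_eq_edges_on[OF c ct] using sum_degree_edges_on[OF _ symp_gamma_adj] by simp
  also have "\<dots> = (\<Sum>i\<in>{1..k}. \<Sum>x\<in>U i. card {y \<in> V. y \<noteq> x \<and> gamma_adj ct t c x y})"
    unfolding V_eq using finite_U U_disjoint by (subst sum.UNION_disjoint) auto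
  finally show ?thesis
    by (simp add: sum_degrees_part[OF c])
qed

lemma real_inner_degree_sum:
  assumes "i \<in> {1..k}"
  shows "real (inner_degree_sum t i) =
    (case t i of PC \<Rightarrow> real (n i) * (real (n i) - 1) | PSC \<Rightarrow> 0 | PSS \<Rightarrow> 2 * (real (n i) - 1))"
  using n_ge_2[OF assms] by (cases "t i") (auto simp: inner_degree_sum_def of_nat_diff)

lemma double_card_Gamma_real:
  assumes c: "valid_centers k U c" and ct: "valid_central ct"
  shows "2 * real (card (Gamma k U ct t c)) = (\<Sum>i\<in>{1..k}. real (inner_degree_sum t i) +
    real (rep_count t i) * (\<Sum>l\<in>{1..k} - {i}. if parts_adjacent ct i l then real (rep_count t l) else 0))"
proof -
  have "real (2 * card (Gamma k U ct t c)) =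
      real (\<Sum>i\<in>{1..k}. inner_degree_sum t i + rep_count t i * outer_degree ct t i)"
    using double_card_Gamma[OF c ct] by simp
  then show ?thesis
    unfolding outer_degree_def by (simp add: of_nat_sum if_distrib cong: if_cong)
qed

definition size_Gamma1 :: real where
  "size_Gamma1 = real k * (real k - 1) / 2 + (\<Sum>i=1..k. (real (n i) - 1))"

definition size_Gamma2 :: "nat \<Rightarrow> real" where
  "size_Gamma2 j = real (n j) * (real k - 1) + real (n j) * (real (n j) - 1) / 2
    + (\<Sum>i\<in>{1..k} - {j}. (real (n i) - 1))"

definition size_Gamma3 :: "nat \<Rightarrow> real" where
  "size_Gamma3 j = real (n j) * (real k - 1) + (\<Sum>i\<in>{1..k} - {j}. (real (n i) - 1))"

lemma size_Gamma2_eq: "size_Gamma2 j = size_Gamma3 j + real (n j) * (real (n j) - 1) / 2"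
  unfolding size_Gamma2_def size_Gamma3_def by simp

(* Twice the number of extra edges of the clique leaves of a star, compared with ss leaves. *)
definition clique_leaf_excess :: "(nat \<Rightarrow> part_type) \<Rightarrow> nat \<Rightarrow> real" where
  "clique_leaf_excess t j = (\<Sum>i\<in>{1..k} - {j}.
    if t i = PC then (real (n i) - 1) * (real (n i) - 2 + 2 * real (n j)) else 0)"

lemma card_Gamma1:
  assumes c: "valid_centers k U c"
  shows "real (card (Gamma1 k U c)) = size_Gamma1"
proof -
  have "2 * real (card (Gamma1 k U c)) = (\<Sum>i\<in>{1..k}. 2 * (real (n i) - 1) + (real k - 1))"
    unfolding Gamma1_def double_card_Gamma_real[OF c valid_central_Complete]
    by (rule sum.cong) (auto simp: real_inner_degree_sum rep_count_def of_nat_diff)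
  also have "\<dots> = 2 * (\<Sum>i=1..k. real (n i) - 1) + real k * (real k - 1)"
    unfolding sum.distrib by (simp add: sum_distrib_left)
  also have "\<dots> = 2 * size_Gamma1"
    unfolding size_Gamma1_def by simp
  finally show ?thesis
    by simp
qed

lemma double_card_Gamma_star:
  assumes c: "valid_centers k U c" and j: "j \<in> {1..k}" and tj: "t j \<noteq> PSS"
  shows "2 * real (card (Gamma k U (StarToward j) t c)) = real (inner_degree_sum t j) +
    (\<Sum>i\<in>{1..k} - {j}. real (inner_degree_sum t i) + 2 * real (n j) * real (rep_count t i))"
proof -
  let ?A = "{1..k} - {j}"
  let ?r = "\<lambda>i. real (rep_count t i)"
  let ?f = "\<lambda>i. real (inner_degree_sum t i) +
    ?r i * (\<Sum>l\<in>{1..k} - {i}. if parts_adjacent (StarToward j) i l then ?r l else 0)"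
  have rj: "?r j = real (n j)"
    using tj unfolding rep_count_def by simp
  have hub: "?f j = real (inner_degree_sum t j) + (\<Sum>i\<in>?A. real (n j) * ?r i)"
    using rj by (simp add: sum_distrib_left)
  have leaves: "?f i = real (inner_degree_sum t i) + real (n j) * ?r i" if "i \<in> ?A" for i
  proof -
    have "(\<Sum>l\<in>{1..k} - {i}. if parts_adjacent (StarToward j) i l then ?r l else 0) =
        (\<Sum>l\<in>{1..k} - {i}. if l = j then ?r l else 0)"
      using that by (intro sum.cong) auto
    then show ?thesis
      using that j rj by simp
  qed
  have "2 * real (card (Gamma k U (StarToward j) t c)) = ?f j + (\<Sum>i\<in>?A. ?f i)"
    using j double_card_Gamma_real[OF c, of "StarToward j" t]
    by (simp add: valid_central_StarToward sum.remove)
  also have "\<dots> = (real (inner_degree_sum t j) + (\<Sum>i\<in>?A. real (n j) * ?r i)) +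
      (\<Sum>i\<in>?A. real (inner_degree_sum t i) + real (n j) * ?r i)"
    by (simp only: hub sum.cong[OF refl leaves])
  finally show ?thesis
    by (simp add: sum.distrib sum_distrib_left algebra_simps)
qed

lemma card_Gamma_star:
  assumes c: "valid_centers k U c" and j: "j \<in> {1..k}" and tj: "t j \<noteq> PSS"
    and no_independent: "\<forall>i\<in>{1..k}. i \<noteq> j \<longrightarrow> t i \<noteq> PSC"
  shows "real (card (Gamma k U (StarToward j) t c)) = size_Gamma3 j +
    (if t j = PC then real (n j) * (real (n j) - 1) / 2 else 0) + clique_leaf_excess t j / 2"
proof -
  have leaf: "real (inner_degree_sum t i) + 2 * real (n j) * real (rep_count t i) =
      2 * (real (n i) - 1) + 2 * real (n j) +
      (if t i = PC then (real (n i) - 1) * (real (n i) - 2 + 2 * real (n j)) else 0)"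
    if "i \<in> {1..k} - {j}" for i
    using that no_independent
    by (cases "t i") (auto simp: real_inner_degree_sum rep_count_def algebra_simps)
  have "2 * real (card (Gamma k U (StarToward j) t c)) = real (inner_degree_sum t j) +
      2 * (\<Sum>i\<in>{1..k} - {j}. real (n i) - 1) + 2 * real (n j) * (real k - 1) + clique_leaf_excess t j"
    using j unfolding double_card_Gamma_star[of c j t, OF c j tj]
    by (simp add: leaf sum.distrib clique_leaf_excess_def sum_distrib_left of_nat_diff)
  moreover have "real (inner_degree_sum t j) =
      2 * (if t j = PC then real (n j) * (real (n j) - 1) / 2 else 0)"
    using tj real_inner_degree_sum[OF j] by (cases "t j") auto
  ultimately show ?thesis
    unfolding size_Gamma3_def by linarith
qed

lemma card_Gamma2: "valid_centers k U c \<Longrightarrow> j \<in> {1..k} \<Longrightarrow> real (card (Gamma2 k U j c)) = size_Gamma2 j"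
  unfolding Gamma2_def using card_Gamma_star[of c j "\<lambda>i. if i = j then PC else PSS"]
  by (simp add: clique_leaf_excess_def size_Gamma2_eq)

lemma card_Gamma3: "valid_centers k U c \<Longrightarrow> j \<in> {1..k} \<Longrightarrow> real (card (Gamma3 k U j c)) = size_Gamma3 j"
  unfolding Gamma3_def using card_Gamma_star[of c j "\<lambda>i. if i = j then PSC else PSS"]
  by (simp add: clique_leaf_excess_def)

lemma card_Gamma_complete_ge:
  assumes c: "valid_centers k U c" and no_clique: "\<forall>i\<in>{1..k}. t i \<noteq> PC"
  shows "real (card (Gamma k U Complete t c)) \<ge>
    size_Gamma1 + (real k - 2) * (\<Sum>i\<in>{1..k}. if t i = PSC then real (n i) - 1 else 0)"
proof -
  let ?A = "{1..k}"
  define s where "s i = real (rep_count t i) - 1" for i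
  define S where "S = (\<Sum>i\<in>?A. s i)"
  have r: "real (rep_count t i) = 1 + s i" for i
    unfolding s_def by simp
  have s_nonneg: "s i \<ge> 0" if "i \<in> ?A" for i
    using n_ge_2[OF that] unfolding s_def rep_count_def by auto
  have inner: "real (inner_degree_sum t i) = 2 * (real (n i) - 1) - 2 * s i" if "i \<in> ?A" for i
    using that no_clique unfolding s_def rep_count_def
    by (cases "t i") (auto simp: real_inner_degree_sum)
  have "2 * real (card (Gamma k U Complete t c)) =
      (\<Sum>i\<in>?A. real (inner_degree_sum t i) + (1 + s i) * (\<Sum>l\<in>?A - {i}. 1 + s l))"
    using double_card_Gamma_real[OF c valid_central_Complete] by (simp add: r)
  also have "\<dots> \<ge> (\<Sum>i\<in>?A. 2 * (real (n i) - 1) - 2 * s i + ((real k - 1) * (1 + s i) + (S - s i)))"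
    using inner mult_sum_one_plus_ge[of ?A _ s] s_nonneg unfolding S_def
    by (intro sum_mono) fastforce
  also have "(\<Sum>i\<in>?A. 2 * (real (n i) - 1) - 2 * s i + ((real k - 1) * (1 + s i) + (S - s i))) =
      2 * (size_Gamma1 + (real k - 2) * S)"
    unfolding size_Gamma1_def S_def
    by (simp add: sum.distrib sum_subtractf sum_distrib_left sum_distrib_right field_simps)
  also have "S = (\<Sum>i\<in>?A. if t i = PSC then real (n i) - 1 else 0)"
    unfolding S_def s_def rep_count_def using no_clique
    by (intro sum.cong) (auto intro: part_type.exhaust)
  finally show ?thesis
    by simp
qed

section \<open>Comparing edge counts\<close>

lemma size_Gamma3_eq:
  assumes "j \<in> {1..k}"
  shows "size_Gamma3 j = (real k - 2) * real (n j) + (\<Sum>i=1..k. real (n i) - 1) + 1"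
  unfolding size_Gamma3_def using assms by (simp add: sum_diff1 algebra_simps)

lemma size_Gamma3_mono:
  assumes "a \<in> {1..k}" "b \<in> {1..k}" "n a \<le> n b" "k \<ge> 2"
  shows "size_Gamma3 a \<le> size_Gamma3 b"
  using assms by (simp add: size_Gamma3_eq mult_left_mono)

lemma size_Gamma3_strict_mono:
  assumes "a \<in> {1..k}" "b \<in> {1..k}" "n a < n b" "k \<ge> 3"
  shows "size_Gamma3 a < size_Gamma3 b"
  using assms by (simp add: size_Gamma3_eq mult_strict_left_mono)

lemma size_Gamma2_mono:
  assumes "a \<in> {1..k}" "b \<in> {1..k}" "n a \<le> n b" "k \<ge> 2"
  shows "size_Gamma2 a \<le> size_Gamma2 b"
proof -
  have "real (n a) * (real (n a) - 1) \<le> real (n b) * (real (n b) - 1)"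
    using assms(3) n_ge_2[OF assms(1)] by (intro mult_mono) auto
  then show ?thesis
    using size_Gamma3_mono[OF assms] by (simp add: size_Gamma2_eq)
qed

lemma size_Gamma2_strict_mono:
  assumes "a \<in> {1..k}" "b \<in> {1..k}" "n a < n b" "k \<ge> 3"
  shows "size_Gamma2 a < size_Gamma2 b"
proof -
  have "real (n a) * (real (n a) - 1) \<le> real (n b) * (real (n b) - 1)"
    using assms(3) n_ge_2[OF assms(1)] by (intro mult_mono) auto
  then show ?thesis
    using size_Gamma3_strict_mono[OF assms] by (simp add: size_Gamma2_eq)
qed

lemma size_Gamma3_less_size_Gamma2: "j \<in> {1..k} \<Longrightarrow> size_Gamma3 j < size_Gamma2 j"
  using n_ge_2[of j] by (simp add: size_Gamma2_eq)

lemma f_val_eq_size_diff: "j \<in> {1..k} \<Longrightarrow> f_val k (n j) = size_Gamma2 j - size_Gamma1"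
  unfolding f_val_def size_Gamma2_eq size_Gamma3_eq size_Gamma1_def by (simp add: field_simps)

lemma clique_leaf_excess_ge:
  assumes j: "j \<in> {1..k}" and l: "l \<in> {1..k}" "l \<noteq> j" "t l = PC"
  shows "clique_leaf_excess t j \<ge> (real (n l) - 1) * (real (n l) - 2 + 2 * real (n j))"
proof -
  let ?e = "\<lambda>i. if t i = PC then (real (n i) - 1) * (real (n i) - 2 + 2 * real (n j)) else 0"
  have "?e i \<ge> 0" if "i \<in> {1..k}" for i
    using n_ge_2[OF that] by simp
  then have "(\<Sum>i\<in>{1..k} - {j} - {l}. ?e i) \<ge> 0"
    by (intro sum_nonneg) auto
  moreover have "clique_leaf_excess t j = ?e l + (\<Sum>i\<in>{1..k} - {j} - {l}. ?e i)"
    unfolding clique_leaf_excess_def using l by (intro sum.remove) auto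
  ultimately show ?thesis
    using l(3) by simp
qed

lemma card_Gamma_complete_gt:
  assumes c: "valid_centers k U c" and k: "k \<ge> 3" and no_clique: "\<forall>i\<in>{1..k}. t i \<noteq> PC"
    and l: "l \<in> {1..k}" "t l = PSC"
  shows "real (card (Gamma k U Complete t c)) > size_Gamma1"
    and "real (card (Gamma k U Complete t c)) > size_Gamma3 l"
proof -
  let ?x = "\<lambda>i. if t i = PSC then real (n i) - 1 else 0"
  have "?x i \<ge> 0" if "i \<in> {1..k}" for i
    using n_ge_2[OF that] by simp
  then have "(\<Sum>i\<in>{1..k} - {l}. ?x i) \<ge> 0"
    by (intro sum_nonneg) auto
  moreover have "(\<Sum>i\<in>{1..k}. ?x i) = ?x l + (\<Sum>i\<in>{1..k} - {l}. ?x i)"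
    using l by (intro sum.remove) auto
  ultimately have "(\<Sum>i\<in>{1..k}. ?x i) \<ge> real (n l) - 1"
    using l(2) by simp
  then have "(real k - 2) * (\<Sum>i\<in>{1..k}. ?x i) \<ge> (real k - 2) * (real (n l) - 1)"
    using k by (intro mult_left_mono) auto
  then have ge:
      "real (card (Gamma k U Complete t c)) \<ge> size_Gamma1 + (real k - 2) * (real (n l) - 1)"
    using card_Gamma_complete_ge[OF c no_clique] by linarith
  have "(real k - 2) * (real (n l) - 1) > 0"
    using k n_ge_2[OF l(1)] by simp
  then show "real (card (Gamma k U Complete t c)) > size_Gamma1"
    using ge by linarith
  have "size_Gamma1 + (real k - 2) * (real (n l) - 1) =
      size_Gamma3 l + (real k - 1) * (real k - 2) / 2"
    unfolding size_Gamma3_eq[OF l(1)] size_Gamma1_def by (simp add: field_simps)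
  moreover have "(real k - 1) * (real k - 2) / 2 > 0"
    using k by simp
  ultimately show "real (card (Gamma k U Complete t c)) > size_Gamma3 l"
    using ge by linarith
qed

lemma clique_leaf_cost_gt_min:
  fixes a b K :: real
  assumes a: "a \<ge> 2" and b: "b \<ge> 2" and K: "K \<ge> 0"
  shows "(b - 1) * (b - 2 + 2 * a) / 2 > min (a * (a - 1) / 2) (K * (b - a) + b * (b - 1) / 2)"
proof (cases "b \<le> a")
  case True
  have "(b - 1) * (a - 1) \<ge> 1"
    using mult_mono[of 1 "b - 1" 1 "a - 1"] a b by simp
  moreover have "K * (b - a) \<le> 0"
    using True K by (simp add: mult_nonneg_nonpos)
  ultimately have "(b - 1) * (b - 2 + 2 * a) / 2 > K * (b - a) + b * (b - 1) / 2"
    by (simp add: field_simps)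
  then show ?thesis
    by linarith
next
  case False
  have "(a - 1) * a < (b - 1) * (b - 2 + 2 * a)"
    using False a b by (intro mult_strict_mono) auto
  then show ?thesis
    by (simp add: min_def mult.commute)
qed

lemma card_Gamma_star_clique_leaf_gt:
  assumes c: "valid_centers k U c" and k: "k \<ge> 3" and adm: "admissible (StarToward j) t"
    and l: "l \<in> {1..k}" "l \<noteq> j" "t l = PC"
  shows "real (card (Gamma k U (StarToward j) t c)) > min (size_Gamma2 j) (size_Gamma2 l)"
proof -
  have j: "j \<in> {1..k}" and tj: "t j \<noteq> PSS"
    and no_independent: "\<forall>i\<in>{1..k}. i \<noteq> j \<longrightarrow> t i \<noteq> PSC"
    using adm unfolding admissible_def by auto
  let ?a = "real (n j)" and ?b = "real (n l)"
  have card: "real (card (Gamma k U (StarToward j) t c)) \<ge>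
      size_Gamma3 j + (if t j = PC then ?a * (?a - 1) / 2 else 0) + (?b - 1) * (?b - 2 + 2 * ?a) / 2"
    using card_Gamma_star[OF c j tj no_independent] clique_leaf_excess_ge[of j l t, OF j l] by simp
  have "(?b - 1) * (?b - 2 + 2 * ?a) > 0"
    using n_ge_2[OF j] n_ge_2[OF l(1)] by simp
  moreover have "(?b - 1) * (?b - 2 + 2 * ?a) / 2 >
      min (?a * (?a - 1) / 2) ((real k - 2) * (?b - ?a) + ?b * (?b - 1) / 2)"
    using n_ge_2[OF j] n_ge_2[OF l(1)] k by (intro clique_leaf_cost_gt_min) auto
  moreover have "min (size_Gamma2 j) (size_Gamma2 l) = size_Gamma3 j +
      min (?a * (?a - 1) / 2) ((real k - 2) * (?b - ?a) + ?b * (?b - 1) / 2)"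
    unfolding size_Gamma2_eq size_Gamma3_eq[OF j] size_Gamma3_eq[OF l(1)]
    by (simp add: min_add_distrib_left algebra_simps)
  ultimately show ?thesis
    using card tj by (cases "t j") (auto simp: size_Gamma2_eq)
qed

lemma admissible_complete_cases:
  assumes c: "valid_centers k U c" and k: "k \<ge> 3" and adm: "admissible Complete t"
    and j0: "j0 \<in> {1..k}" "\<forall>i\<in>{1..k}. n j0 \<le> n i"
  obtains "even k" "Gamma k U Complete t c = Gamma1 k U c"
  | "real (card (Gamma k U Complete t c)) > size_Gamma1"
    "real (card (Gamma k U Complete t c)) > size_Gamma3 j0"
proof -
  have no_clique: "\<forall>i\<in>{1..k}. t i \<noteq> PC" and even: "even (ss_count t)"
    using adm unfolding admissible_def by auto
  show ?thesis
  proof (cases "\<exists>l\<in>{1..k}. t l = PSC")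
    case True
    then obtain l where l: "l \<in> {1..k}" "t l = PSC"
      by blast
    have "size_Gamma3 j0 \<le> size_Gamma3 l"
      using size_Gamma3_mono[OF j0(1) l(1)] j0(2) l(1) k by simp
    with card_Gamma_complete_gt[OF c k no_clique l] show ?thesis
      by (intro that(2)) simp_all
  next
    case False
    then have all_ss: "\<forall>i\<in>{1..k}. t i = PSS"
      using no_clique by (metis part_type.exhaust)
    then have "{i \<in> {1..k}. t i = PSS} = {1..k}"
      by auto
    then have "even k"
      using even unfolding ss_count_def by simp
    moreover have "Gamma k U Complete t c = Gamma1 k U c"
      unfolding Gamma1_def using c all_ss by (intro Gamma_cong) (auto simp: valid_central_Complete)
    ultimately show ?thesis
      by (rule that(1))
  qed
qed

lemma admissible_star_cases:
  assumes c: "valid_centers k U c" and k: "k \<ge> 3" and adm: "admissible (StarToward j) t"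
    and j0: "j0 \<in> {1..k}" "\<forall>i\<in>{1..k}. n j0 \<le> n i"
  obtains "even k" "Gamma k U (StarToward j) t c = Gamma2 k U j c"
  | "odd k" "Gamma k U (StarToward j) t c = Gamma3 k U j c"
  | "real (card (Gamma k U (StarToward j) t c)) > size_Gamma2 j0"
proof -
  have j: "j \<in> {1..k}" and tj: "t j \<noteq> PSS"
    and no_independent: "\<forall>i\<in>{1..k}. i \<noteq> j \<longrightarrow> t i \<noteq> PSC"
    and hub: "t j = PC \<longleftrightarrow> odd (ss_count t)"
    using adm unfolding admissible_def by auto
  show ?thesis
  proof (cases "\<exists>l\<in>{1..k}. l \<noteq> j \<and> t l = PC")
    case True
    then obtain l where l: "l \<in> {1..k}" "l \<noteq> j" "t l = PC"
      by blast
    have "size_Gamma2 j0 \<le> size_Gamma2 j" "size_Gamma2 j0 \<le> size_Gamma2 l"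
      using size_Gamma2_mono[OF j0(1) j] size_Gamma2_mono[OF j0(1) l(1)] j0(2) j l(1) k by auto
    with card_Gamma_star_clique_leaf_gt[OF c k adm l] show ?thesis
      by (intro that(3)) simp
  next
    case False
    then have leaves: "\<forall>i\<in>{1..k}. i \<noteq> j \<longrightarrow> t i = PSS"
      using no_independent by (metis part_type.exhaust)
    then have "{i \<in> {1..k}. t i = PSS} = {1..k} - {j}"
      using tj by auto
    then have "ss_count t = k - 1"
      unfolding ss_count_def using j by simp
    then have hub_type: "t j = (if even k then PC else PSC)"
      using hub j tj by (cases "t j") auto
    have star: "Gamma k U (StarToward j) t c =
        Gamma k U (StarToward j) (\<lambda>i. if i = j then (if even k then PC else PSC) else PSS) c"
      using c j leaves hub_type by (intro Gamma_cong) (auto simp: valid_central_StarToward)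
    show ?thesis
    proof (cases "even k")
      case True
      with star show ?thesis
        by (intro that(1)) (simp_all add: Gamma2_def)
    next
      case False
      with star show ?thesis
        by (intro that(2)) (simp_all add: Gamma3_def)
    qed
  qed
qed

lemma admissible_Gamma_cases:
  assumes k: "k \<ge> 3" and E: "admissible_Gamma E"
    and j0: "j0 \<in> {1..k}" "\<forall>i\<in>{1..k}. n j0 \<le> n i"
  obtains (Gamma1) c where "even k" "valid_centers k U c" "E = Gamma1 k U c"
  | (Gamma2) j c where "even k" "j \<in> {1..k}" "valid_centers k U c" "E = Gamma2 k U j c"
  | (Gamma3) j c where "odd k" "j \<in> {1..k}" "valid_centers k U c" "E = Gamma3 k U j c"
  | (too_big) "real (card E) > min size_Gamma1 (size_Gamma2 j0)" "real (card E) > size_Gamma3 j0"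
proof -
  obtain ct t c where c: "valid_centers k U c" and adm: "admissible ct t"
    and E: "E = Gamma k U ct t c"
    using E unfolding admissible_Gamma_def by blast
  have size: "size_Gamma3 j0 < size_Gamma2 j0"
    using size_Gamma3_less_size_Gamma2[OF j0(1)] .
  show ?thesis
  proof (cases ct)
    case Complete
    from c k adm[unfolded Complete] j0 show ?thesis
      by (rule admissible_complete_cases) (use Gamma1 too_big c E Complete in auto)
  next
    case (StarToward j)
    have "j \<in> {1..k}"
      using adm unfolding StarToward admissible_def by auto
    from c k adm[unfolded StarToward] j0 show ?thesis
      by (rule admissible_star_cases)
        (use Gamma2 Gamma3 too_big c E StarToward size \<open>j \<in> {1..k}\<close> in auto)
  qed
qed

lemma obtain_smallest_part:
  assumes "k \<ge> 1"
  obtains j0 where "j0 \<in> {1..k}" "n j0 = Min (n ` {1..k})" "\<forall>i\<in>{1..k}. n j0 \<le> n i"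
proof -
  obtain j0 where "j0 \<in> {1..k}" "n j0 = Min (n ` {1..k})"
    using Min_in[of "n ` {1..k}"] assms by fastforce
  then show ?thesis
    using that by simp
qed

end

section \<open>Graphs of minimum size in the orbit\<close>

locale minimal_orbit_graph = multipartite +
  fixes G :: "'a set set"
  assumes k_ge_3: "k \<ge> 3"
    and G_in_orbit: "G \<in> lc_orbit V (complete_multipartite k U)"
    and G_minimal: "\<And>H. H \<in> lc_orbit V (complete_multipartite k U) \<Longrightarrow> card G \<le> card H"
begin

lemma card_G_le:
  assumes "H \<in> orbit" "real (card H) = s"
  shows "real (card G) \<le> s"
  using G_minimal[OF assms(1)] assms(2) by linarith

lemma G_cases:
  assumes "j0 \<in> {1..k}" "\<forall>i\<in>{1..k}. n j0 \<le> n i"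
  obtains (Gamma1) c where "even k" "valid_centers k U c" "G = Gamma1 k U c"
  | (Gamma2) j c where "even k" "j \<in> {1..k}" "valid_centers k U c" "G = Gamma2 k U j c"
  | (Gamma3) j c where "odd k" "j \<in> {1..k}" "valid_centers k U c" "G = Gamma3 k U j c"
  | (too_big) "real (card G) > min size_Gamma1 (size_Gamma2 j0)" "real (card G) > size_Gamma3 j0"
  using admissible_Gamma_cases[OF k_ge_3 lc_orbit_admissible_Gamma[OF G_in_orbit] assms] by blast

lemma minimal_odd:
  assumes odd: "odd k"
  shows "\<exists>j\<in>{1..k}. n j = Min (n ` {1..k}) \<and> (\<exists>c. valid_centers k U c \<and> G = Gamma3 k U j c) \<and>
    real (card G) = size_Gamma3 j"
proof -
  obtain j0 where j0: "j0 \<in> {1..k}" "n j0 = Min (n ` {1..k})" "\<forall>i\<in>{1..k}. n j0 \<le> n i"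
    using obtain_smallest_part k_ge_3 by auto
  obtain c0 where c0: "valid_centers k U c0"
    using exists_valid_centers by blast
  have upper: "real (card G) \<le> size_Gamma3 j0"
    using card_G_le star_all_ss_in_orbit[OF c0 j0(1)] card_Gamma3[OF c0 j0(1)] odd by simp
  from j0(1,3) show ?thesis
  proof (cases rule: G_cases)
    case (Gamma3 j c)
    have card: "real (card G) = size_Gamma3 j"
      using card_Gamma3[OF Gamma3(3,2)] Gamma3(4) by simp
    have "\<not> n j0 < n j"
      using size_Gamma3_strict_mono[OF j0(1) Gamma3(2) _ k_ge_3] upper card by linarith
    then have "n j = Min (n ` {1..k})"
      using j0 Gamma3(2) by (metis le_neq_implies_less)
    then show ?thesis
      using Gamma3 card by blast
  qed (use odd upper in auto)
qed

lemma minimal_even_pos: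
  assumes even: "even k" and f: "f_val k (Min (n ` {1..k})) > 0"
  shows "(\<exists>c. valid_centers k U c \<and> G = Gamma1 k U c) \<and> real (card G) = size_Gamma1"
proof -
  obtain j0 where j0: "j0 \<in> {1..k}" "n j0 = Min (n ` {1..k})" "\<forall>i\<in>{1..k}. n j0 \<le> n i"
    using obtain_smallest_part k_ge_3 by auto
  have less: "size_Gamma1 < size_Gamma2 j0"
    using f f_val_eq_size_diff[OF j0(1)] j0(2) by simp
  obtain c0 where c0: "valid_centers k U c0"
    using exists_valid_centers by blast
  have upper: "real (card G) \<le> size_Gamma1"
    using card_G_le Gamma1_in_orbit[OF c0 even] card_Gamma1[OF c0] k_ge_3 by simp
  from j0(1,3) show ?thesis
  proof (cases rule: G_cases)
    case (Gamma1 c)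
    then show ?thesis
      using card_Gamma1 by blast
  next
    case (Gamma2 j c)
    then show ?thesis
      using card_Gamma2[OF Gamma2(3,2)] size_Gamma2_mono[OF j0(1) Gamma2(2)] j0(3) k_ge_3 less upper
      by simp
  qed (use even less upper in auto)
qed

lemma minimal_even_neg:
  assumes even: "even k" and f: "f_val k (Min (n ` {1..k})) < 0"
  shows "\<exists>j\<in>{1..k}. n j = Min (n ` {1..k}) \<and> (\<exists>c. valid_centers k U c \<and> G = Gamma2 k U j c) \<and>
    real (card G) = size_Gamma2 j"
proof -
  obtain j0 where j0: "j0 \<in> {1..k}" "n j0 = Min (n ` {1..k})" "\<forall>i\<in>{1..k}. n j0 \<le> n i"
    using obtain_smallest_part k_ge_3 by auto
  have less: "size_Gamma2 j0 < size_Gamma1"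
    using f f_val_eq_size_diff[OF j0(1)] j0(2) by simp
  obtain c0 where c0: "valid_centers k U c0"
    using exists_valid_centers by blast
  have upper: "real (card G) \<le> size_Gamma2 j0"
    using card_G_le star_all_ss_in_orbit[OF c0 j0(1)] card_Gamma2[OF c0 j0(1)] even by simp
  from j0(1,3) show ?thesis
  proof (cases rule: G_cases)
    case (Gamma1 c)
    then show ?thesis
      using card_Gamma1[OF Gamma1(2)] less upper by simp
  next
    case (Gamma2 j c)
    have card: "real (card G) = size_Gamma2 j"
      using card_Gamma2[OF Gamma2(3,2)] Gamma2(4) by simp
    have "\<not> n j0 < n j"
      using size_Gamma2_strict_mono[OF j0(1) Gamma2(2) _ k_ge_3] upper card by linarith
    then have "n j = Min (n ` {1..k})"
      using j0 Gamma2(2) by (metis le_neq_implies_less)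
    then show ?thesis
      using Gamma2 card by blast
  qed (use even less upper in auto)
qed

lemma minimal_even_zero:
  assumes even: "even k" and f: "f_val k (Min (n ` {1..k})) = 0"
    and j: "j \<in> {1..k}" "n j = Min (n ` {1..k})" and c: "valid_centers k U c"
  shows "card (Gamma1 k U c) = card (Gamma2 k U j c)" "Gamma1 k U c \<in> orbit"
    "Gamma2 k U j c \<in> orbit" "card (Gamma1 k U c) = card G"
proof -
  have j_min: "\<forall>i\<in>{1..k}. n j \<le> n i"
    using j(2) by simp
  have eq: "size_Gamma2 j = size_Gamma1"
    using f f_val_eq_size_diff[OF j(1)] j(2) by simp
  show "card (Gamma1 k U c) = card (Gamma2 k U j c)"
    using card_Gamma1[OF c] card_Gamma2[OF c j(1)] eq by simp
  show G1: "Gamma1 k U c \<in> orbit"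
    using Gamma1_in_orbit[OF c even] k_ge_3 by simp
  show "Gamma2 k U j c \<in> orbit"
    using star_all_ss_in_orbit[OF c j(1)] even by simp
  have "real (card G) \<ge> size_Gamma1"
    using j(1) j_min
  proof (cases rule: G_cases)
    case (Gamma1 c')
    then show ?thesis
      using card_Gamma1 by simp
  next
    case (Gamma2 j' c')
    then show ?thesis
      using card_Gamma2[OF Gamma2(3,2)] size_Gamma2_mono[OF j(1) Gamma2(2)] j_min k_ge_3 eq by simp
  qed (use even eq in auto)
  then show "card (Gamma1 k U c) = card G"
    using G_minimal[OF G1] card_Gamma1[OF c] by linarith
qed

end

theorem theorem11:
  fixes k :: nat and U :: "nat \<Rightarrow> 'a set" and n :: "nat \<Rightarrow> nat"
    and V :: "'a set" and G :: "'a set set"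
  assumes k3: "k \<ge> 3"
    and fin: "\<forall>i\<in>{1..k}. finite (U i)"
    and card_U: "\<forall>i\<in>{1..k}. card (U i) = n i"
    and n2: "\<forall>i\<in>{1..k}. n i \<ge> 2"
    and disj: "\<forall>i\<in>{1..k}. \<forall>l\<in>{1..k}. i \<noteq> l \<longrightarrow> U i \<inter> U l = {}"
    and V_def: "V = (\<Union>i\<in>{1..k}. U i)"
    and G_orb: "G \<in> lc_orbit V (complete_multipartite k U)"
    and G_min: "\<forall>H\<in>lc_orbit V (complete_multipartite k U). card G \<le> card H"
  shows
    "(even k \<and> f_val k (Min (n ` {1..k})) > 0 \<longrightarrow>
        (\<exists>c. valid_centers k U c \<and> G = Gamma1 k U c) \<and>
        real (card G) = real k * (real k - 1) / 2 + (\<Sum>i=1..k. (real (n i) - 1)))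
   \<and> (even k \<and> f_val k (Min (n ` {1..k})) < 0 \<longrightarrow>
        (\<exists>j\<in>{1..k}. n j = Min (n ` {1..k}) \<and>
           (\<exists>c. valid_centers k U c \<and> G = Gamma2 k U j c) \<and>
           real (card G) = real (n j) * (real k - 1) + real (n j) * (real (n j) - 1) / 2
                           + (\<Sum>i\<in>{1..k} - {j}. (real (n i) - 1))))
   \<and> (even k \<and> f_val k (Min (n ` {1..k})) = 0 \<longrightarrow>
        (\<forall>j\<in>{1..k}. \<forall>c. n j = Min (n ` {1..k}) \<and> valid_centers k U c \<longrightarrow>
           card (Gamma1 k U c) = card (Gamma2 k U j c) \<and>
           Gamma1 k U c \<in> lc_orbit V (complete_multipartite k U) \<and>
           Gamma2 k U j c \<in> lc_orbit V (complete_multipartite k U) \<and>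
           card (Gamma1 k U c) = card G))
   \<and> (odd k \<longrightarrow>
        (\<exists>j\<in>{1..k}. n j = Min (n ` {1..k}) \<and>
           (\<exists>c. valid_centers k U c \<and> G = Gamma3 k U j c) \<and>
           real (card G) = real (n j) * (real k - 1) + (\<Sum>i\<in>{1..k} - {j}. (real (n i) - 1))))"
proof -
  interpret minimal_orbit_graph k U n V G
    by unfold_locales (use assms in auto)
  show ?thesis
    using minimal_even_pos minimal_even_neg minimal_even_zero minimal_odd
    unfolding size_Gamma1_def size_Gamma2_def size_Gamma3_def by blast
qed

end
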